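(* Let $p=\sum_{i=0}^n c_iT^i$ be a polynomial of degree $n\ge1$ over $\mathbb S$ and let $a\in\{1,-1\}$ be a root of $p$. Define $l=\min\{i\in\mathbb N: c_i\ne0\}$ and $k=\min\{i\in\mathbb N: c_{i+1}=-a^{i+1-l}c_l\}$. Define $d_{n-1},\dots,d_0\in\mathbb S$ recursively in decreasing order of $i$ by: $d_i=c_{i+1}$ if $c_{i+1}\ne0$ and $i>k$; $d_i=ad_{i+1}$ if $c_{i+1}=0$ and $i>k$; $d_i=-a^{i+l-1}c_l$ if $l\le i\le k$; $d_i=0$ if $0\le i<l$. Then $q=\sum_{i=0}^{n-1}d_iT^i$ satisfies $p\in(T-a)\boxdot q$, i.e. $c_n=d_{n-1}$, $c_0=-ad_0$, and $c_i\in(-ad_i)\boxplus d_{i-1}$ for $i=1,\dots,n-1$.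
   Context: The sign hyperfield $\mathbb S$ is $\{0,1,-1\}$ with the usual multiplication and hyperaddition $0\boxplus a=\{a\}$, $1\boxplus1=\{1\}$, $(-1)\boxplus(-1)=\{-1\}$, $1\boxplus(-1)=\{0,1,-1\}$. Iterated sums: $\boxplus_{i=1}^n a_i=\bigcup_{b\in\boxplus_{i=1}^{n-1}a_i} b\boxplus a_n$. Polynomials over $\mathbb S$ are finitely supported sequences $\sum c_iT^i$ of degree the largest $k$ with $c_k\ne0$; hyperproduct $p\boxdot q=\{\sum e_iT^i : e_i\in \boxplus_{k+l=i} c_kd_l\}$. An element $a\in\mathbb S$ is a root of $p=\sum c_iT^i$ if $0\in\boxplus_i c_ia^i$. *)

theory Defs
  imports Complex_Main
begin

text \<open>The sign hyperfield S = {0,1,-1}, modelled inside the reals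
  (its multiplication is the usual one).\<close>

definition sgn_hf :: "real set" where
  "sgn_hf = {0, 1, -1}"

definition hplus :: "real \<Rightarrow> real \<Rightarrow> real set" where
  "hplus a b = (if a = 0 then {b} else if b = 0 then {a}
                else if a = b then {a} else {0, 1, -1})"

text \<open>Iterated hypersum of a list, left to right:
  the sum of a_1..a_n is the union over b in the sum of a_1..a_(n-1) of b hplus a_n.
  Starting from {0} is harmless since 0 hplus a = {a}.\<close>
definition hsum :: "real list \<Rightarrow> real set" where
  "hsum xs = foldl (\<lambda>S x. \<Union>b\<in>S. hplus b x) {0} xs"

text \<open>Polynomials over S as coefficient sequences nat => real (finitely supported,
  values in S). Hyperproduct of two polynomials.\<close>
definition hprod :: "(nat \<Rightarrow> real) \<Rightarrow> (nat \<Rightarrow> real) \<Rightarrow> (nat \<Rightarrow> real) set" where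
  "hprod c d = {e. \<forall>i. e i \<in> hsum (map (\<lambda>j. c j * d (i - j)) [0..<Suc i])}"

definition is_root :: "(nat \<Rightarrow> real) \<Rightarrow> nat \<Rightarrow> real \<Rightarrow> bool" where
  "is_root c n a \<longleftrightarrow> 0 \<in> hsum (map (\<lambda>i. c i * a ^ i) [0..<Suc n])"

end

theory Submission
  imports Defs
begin

text \<open>At a root a the signed terms c i a^i have a hypersum containing 0, so some term has the
  sign opposite to the first nonzero one; hence k exists and l \<le> k < n. Then the recursion for d
  matches p coefficientwise against (T - a) q: below l everything vanishes; for l < i \<le> k one has
  d (i-1) = a d i \<noteq> 0, so -a d i and d (i-1) are opposite and their hypersum is all of S; at i = k+1
  the coefficient d k = c (k+1) is reached; above k+1 either d (i-1) = c i, or c i = 0 and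
  d (i-1) = a d i cancels against -a d i.\<close>

lemma unit_sign_power: "a \<in> {1, -1::real} \<Longrightarrow> a ^ m = (if even m then 1 else a)"
  by auto

lemma unit_sign_powi: "a \<in> {1, -1::real} \<Longrightarrow> a powi m = (if even m then 1 else a)"
  by auto

lemma hplus_zero: "hplus x 0 = {x}" "hplus 0 x = {x}"
  unfolding hplus_def by auto

lemma hplus_nonzero_right: "y \<in> {1, -1} \<Longrightarrow> y \<in> hplus x y"
  unfolding hplus_def by auto

lemma hplus_opposite_cancel: "0 \<in> hplus (- x) (x::real)"
  unfolding hplus_def by auto

lemma hplus_opposite: "x \<noteq> 0 \<Longrightarrow> z \<in> {0, 1, -1} \<Longrightarrow> z \<in> hplus x (- x::real)"
  unfolding hplus_def by auto

lemma foldl_hplus_zeros: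
  "\<forall>x\<in>set xs. x = 0 \<Longrightarrow> foldl (\<lambda>S x. \<Union>b\<in>S. hplus b x) S xs = S"
  by (induction xs arbitrary: S) (auto simp: hplus_zero)

lemma foldl_hplus_one_sign_absorbed:
  assumes "s \<noteq> 0" "set xs \<subseteq> {0, s}" "S \<subseteq> {s}"
  shows "foldl (\<lambda>S x. \<Union>b\<in>S. hplus b x) S xs \<subseteq> {s}"
  using assms
proof (induction xs arbitrary: S)
  case (Cons x xs)
  then have "(\<Union>b\<in>S. hplus b x) \<subseteq> {s}" by (auto simp: hplus_def)
  then show ?case using Cons by simp
qed simp

lemma foldl_hplus_one_sign:
  assumes "s \<noteq> 0" "set xs \<subseteq> {0, s}" "S \<subseteq> {0, s}" "s \<in> set xs"
  shows "foldl (\<lambda>S x. \<Union>b\<in>S. hplus b x) S xs \<subseteq> {s}"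
  using assms
proof (induction xs arbitrary: S)
  case (Cons x xs)
  show ?case
  proof (cases "x = s")
    case True
    then have "(\<Union>b\<in>S. hplus b x) \<subseteq> {s}" using Cons.prems by (auto simp: hplus_def)
    then show ?thesis using Cons.prems foldl_hplus_one_sign_absorbed[of s xs] by simp
  next
    case False
    then have "x = 0" "s \<in> set xs" using Cons.prems by auto
    then show ?thesis using Cons by (simp add: hplus_zero)
  qed
qed simp

lemma hsum_zero_has_opposite:
  assumes "set xs \<subseteq> {0, 1, -1}" "s \<in> set xs" "s \<noteq> 0" "0 \<in> hsum xs"
  shows "- s \<in> set xs"
proof (rule ccontr)
  assume no_opposite: "- s \<notin> set xs"
  have s: "s \<in> {1, -1}" using assms(1-3) by blast
  have "set xs \<subseteq> {0, s}"
  proof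
    fix x assume x: "x \<in> set xs"
    then have "x \<in> {0, 1, -1}" using assms(1) by blast
    then show "x \<in> {0, s}" using s x no_opposite by auto
  qed
  then have "hsum xs \<subseteq> {s}"
    unfolding hsum_def using assms(2,3) by (intro foldl_hplus_one_sign) auto
  then show False using assms(3,4) by auto
qed

lemma hsum_linear_factor_coeff:
  assumes "i \<ge> 1"
  shows "hsum (map (\<lambda>j. (if j = 0 then - a else if j = 1 then 1 else 0) * D (i - j)) [0..<Suc i])
     = hplus (- a * D i) (D (i - 1))"
proof -
  have "[0..<Suc i] = [0, 1] @ [2..<Suc i]" using assms
    by (simp add: upt_conv_Cons numeral_2_eq_2 del: upt_Suc)
  then show ?thesis unfolding hsum_def by (simp add: foldl_hplus_zeros hplus_zero)
qed

lemma hprod_linear_factor_iff: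
  "e \<in> hprod (\<lambda>j. if j = 0 then - a else if j = 1 then 1 else 0) D \<longleftrightarrow>
     e 0 = - a * D 0 \<and> (\<forall>i\<ge>1. e i \<in> hplus (- a * D i) (D (i - 1)))"
  (is "_ \<longleftrightarrow> ?bottom \<and> ?higher")
proof -
  let ?coeff = "\<lambda>i. hsum (map (\<lambda>j. (if j = 0 then - a else if j = 1 then 1 else 0) * D (i - j))
                         [0..<Suc i])"
  have coeff0: "?coeff 0 = {- a * D 0}"
    unfolding hsum_def by (simp add: hplus_zero)
  have "(\<forall>i. e i \<in> ?coeff i) \<longleftrightarrow> ?bottom \<and> ?higher"
  proof
    assume e: "\<forall>i. e i \<in> ?coeff i"
    have "e i \<in> hplus (- a * D i) (D (i - 1))" if "i \<ge> 1" for i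
      using e[rule_format, of i] unfolding hsum_linear_factor_coeff[OF that] .
    then show "?bottom \<and> ?higher"
      using e[rule_format, of 0] unfolding coeff0 by simp
  next
    assume h: "?bottom \<and> ?higher"
    show "\<forall>i. e i \<in> ?coeff i"
    proof
      fix i
      show "e i \<in> ?coeff i"
      proof (cases "i = 0")
        case True
        show ?thesis unfolding True coeff0 using h by simp
      next
        case False
        then have "i \<ge> 1" by simp
        then show ?thesis unfolding hsum_linear_factor_coeff[OF \<open>i \<ge> 1\<close>] using h by blast
      qed
    qed
  qed
  then show ?thesis unfolding hprod_def by blast
qed

lemma root_sign_change:
  assumes a: "a \<in> {1, -1}" and coeffs: "\<forall>i. c i \<in> {0, 1, -1}"
    and below: "\<forall>i<l. c i = 0" and cl: "c l \<noteq> 0" and "l \<le> n" and root: "is_root c n a"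
  shows "\<exists>j. l < j \<and> j \<le> n \<and> c j * a ^ j = - (c l * a ^ l)"
proof -
  let ?xs = "map (\<lambda>i. c i * a ^ i) [0..<Suc n]"
  have terms: "c i * a ^ i \<in> {0, 1, -1}" for i
    using coeffs[rule_format, of i] a by (auto simp: unit_sign_power)
  have "set ?xs \<subseteq> {0, 1, -1}" unfolding set_map using terms by blast
  moreover have "c l * a ^ l \<in> set ?xs" using \<open>l \<le> n\<close> by (auto simp del: upt_Suc)
  moreover have "c l * a ^ l \<noteq> 0" using cl a by auto
  ultimately have "- (c l * a ^ l) \<in> set ?xs"
    using root unfolding is_root_def by (intro hsum_zero_has_opposite)
  then obtain j where "j < Suc n" "- (c l * a ^ l) = c j * a ^ j"
    by (auto simp del: upt_Suc)
  then have j: "j \<le> n" "c j * a ^ j = - (c l * a ^ l)" by simp_all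
  moreover have "l < j"
    using j below cl a by (cases j l rule: linorder_cases) auto
  ultimately show ?thesis by blast
qed

lemma first_sign_change:
  assumes a: "a \<in> {1, -1}" and coeffs: "\<forall>i. c i \<in> {0, 1, -1}"
    and below: "\<forall>i<l. c i = 0" and cl: "c l \<noteq> 0" and "l \<le> n" and root: "is_root c n a"
  defines "k \<equiv> LEAST i. c (i + 1) = - (a powi (int (i + 1) - int l)) * c l"
  shows "l \<le> k" "k < n" "c (k + 1) = - (a powi (int (k + 1) - int l)) * c l"
proof -
  let ?P = "\<lambda>i. c (i + 1) = - (a powi (int (i + 1) - int l)) * c l"
  obtain j where j: "l < j" "j \<le> n" "c j * a ^ j = - (c l * a ^ l)"
    using root_sign_change[OF assms(1-6)] by blast
  have "c j = (c j * a ^ j) * a ^ j" using a by (auto simp: unit_sign_power)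
  also have "\<dots> = - (c l * a ^ l) * a ^ j" by (simp only: j(3))
  also have "\<dots> = - (a ^ j * a ^ l) * c l" by (simp add: mult_ac)
  also have "a ^ j * a ^ l = a powi (int j - int l)" using a by (auto simp: unit_sign_power)
  finally have "c j = - (a powi (int j - int l)) * c l" .
  then have Pj: "?P (j - 1)" using j(1) by (simp add: of_nat_diff)
  then show Pk: "?P k" unfolding k_def by (rule LeastI)
  have "k \<le> j - 1" unfolding k_def using Pj by (rule Least_le)
  then show "k < n" using j by linarith
  show "l \<le> k"
  proof (rule ccontr)
    assume "\<not> l \<le> k"
    then consider "k + 1 < l" | "k + 1 = l" by linarith
    then show False
    proof cases
      case 1
      have "a powi (int (k + 1) - int l) \<noteq> 0" using a by auto
      then show False using 1 Pk below cl by auto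
    next
      case 2
      then show False using Pk cl by simp
    qed
  qed
qed

text \<open>The indices l and k enter only through the properties established above.\<close>

locale linear_factor_quotient =
  fixes c d :: "nat \<Rightarrow> real" and n l k :: nat and a :: real
  assumes coeffs: "\<forall>i. c i \<in> {0, 1, -1}"
    and above_degree: "\<forall>i>n. c i = 0"
    and degree: "c n \<noteq> 0"
    and unit: "a \<in> {1, -1}"
    and below_l: "\<forall>i<l. c i = 0" and cl: "c l \<noteq> 0"
    and l_le_k: "l \<le> k" and k_less_n: "k < n"
    and sign_change: "c (k + 1) = - (a powi (int (k + 1) - int l)) * c l"
    and d_rec: "\<And>i. i < n \<Longrightarrow> d i =
      (if k < i \<and> c (i + 1) \<noteq> 0 then c (i + 1)
       else if k < i \<and> c (i + 1) = 0 then a * d (i + 1)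
       else if l \<le> i \<and> i \<le> k then - (a powi (int i + int l - 1)) * c l
       else 0)"
begin

lemma d_below: "i < l \<Longrightarrow> d i = 0"
  using d_rec[of i] l_le_k k_less_n by auto

lemma d_between: "l \<le> i \<Longrightarrow> i \<le> k \<Longrightarrow> d i = - (a powi (int i + int l - 1)) * c l"
  using d_rec[of i] k_less_n by auto

lemma d_between_nonzero: "l \<le> i \<Longrightarrow> i \<le> k \<Longrightarrow> d i \<noteq> 0"
  using d_between cl unit by (auto simp: unit_sign_powi)

lemma d_between_step:
  assumes "l < i" "i \<le> k"
  shows "d (i - 1) = a * d i"
proof -
  define m where "m = int i + int l - 1"
  have "int (i - 1) + int l - 1 = m - 1" using assms unfolding m_def by simp
  then have "d (i - 1) = - (a powi (m - 1)) * c l" using assms d_between[of "i - 1"] by simp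
  moreover have "d i = - (a powi m) * c l" using assms d_between unfolding m_def by simp
  ultimately show ?thesis using unit by (cases "even m") (auto simp: unit_sign_powi)
qed

lemma d_at_k: "d k = c (k + 1)"
proof -
  have "even (int k + int l - 1) = even (int (k + 1) - int l)" by presburger
  then have "a powi (int k + int l - 1) = a powi (int (k + 1) - int l)"
    by (simp only: unit_sign_powi[OF unit])
  then show ?thesis using d_between[of k] l_le_k sign_change by simp
qed

lemma d_above:
  assumes "k < i" "i < n"
  shows "d i = (if c (i + 1) = 0 then a * d (i + 1) else c (i + 1))"
  using d_rec[of i] assms by auto

lemma coeff_relation:
  assumes "1 \<le> i" "i \<le> n - 1"
  shows "c i \<in> hplus (- a * d i) (d (i - 1))"
proof -
  have ci: "c i \<in> {0, 1, -1}" using coeffs by simp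
  consider "i < l" | "i = l" | "l < i \<and> i \<le> k" | "i = k + 1" | "k + 1 < i" by linarith
  then show ?thesis
  proof cases
    case 1
    then show ?thesis using below_l d_below by (simp add: hplus_zero)
  next
    case 2
    have "odd (int l + int l - 1)" by presburger
    then have "- a * d l = (a * a) * c l" using d_between[of l] l_le_k unit_sign_powi[OF unit] by simp
    also have "\<dots> = c l" using unit by auto
    finally show ?thesis using 2 d_below[of "i - 1"] assms by (simp add: hplus_zero)
  next
    case 3
    then have "- a * d i \<noteq> 0" using d_between_nonzero unit by auto
    then show ?thesis using d_between_step[of i] 3 hplus_opposite[of "- a * d i" "c i"] ci by simp
  next
    case 4
    then show ?thesis using d_at_k sign_change cl unit ci
      by (auto simp: unit_sign_powi intro: hplus_nonzero_right)
  next
    case 5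
    then have "d (i - 1) = (if c i = 0 then a * d i else c i)" using d_above[of "i - 1"] assms by simp
    then show ?thesis using hplus_opposite_cancel[of "a * d i"] hplus_nonzero_right ci by auto
  qed
qed

lemma top_coeff: "c n = d (n - 1)"
proof (cases "k < n - 1")
  case True
  then show ?thesis using d_above[of "n - 1"] degree by simp
next
  case False
  then have "k = n - 1" using k_less_n by simp
  then show ?thesis using d_at_k k_less_n by simp
qed

lemma bottom_coeff: "c 0 = - a * d 0"
proof (cases "l = 0")
  case True
  then show ?thesis using d_between[of 0] unit by (auto simp: unit_sign_powi)
next
  case False
  then show ?thesis using below_l d_below by simp
qed

lemma in_hprod_linear_factor:
  "c \<in> hprod (\<lambda>j. if j = 0 then - a else if j = 1 then 1 else 0) (\<lambda>i. if i < n then d i else 0)"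
  unfolding hprod_linear_factor_iff
proof (intro conjI allI impI)
  show "c 0 = - a * (if 0 < n then d 0 else 0)" using bottom_coeff k_less_n by simp
  fix i :: nat assume "1 \<le> i"
  consider "i < n" | "i = n" | "n < i" by linarith
  then show "c i \<in> hplus (- a * (if i < n then d i else 0)) (if i - 1 < n then d (i - 1) else 0)"
    by cases (use \<open>1 \<le> i\<close> coeff_relation top_coeff above_degree in \<open>auto simp: hplus_zero\<close>)
qed

end

theorem mainTheorem11:
  fixes c d :: "nat \<Rightarrow> real" and n :: nat and a :: real
  assumes coeffs: "\<forall>i. c i \<in> sgn_hf"
    and fin: "\<forall>i>n. c i = 0"
    and deg: "c n \<noteq> 0"
    and n1: "n \<ge> 1"
    and a: "a \<in> {1, -1}"
    and root: "is_root c n a"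
    and d_rec: "\<forall>i<n. d i =
      (let l = (LEAST i. c i \<noteq> 0);
           k = (LEAST i. c (i + 1) = - (a powi (int (i + 1) - int l)) * c l)
       in if k < i \<and> c (i + 1) \<noteq> 0 then c (i + 1)
          else if k < i \<and> c (i + 1) = 0 then a * d (i + 1)
          else if l \<le> i \<and> i \<le> k then - (a powi (int i + int l - 1)) * c l
          else 0)"
  shows "c \<in> hprod (\<lambda>j. if j = 0 then - a else if j = 1 then 1 else 0)
                   (\<lambda>i. if i < n then d i else 0)
       \<and> c n = d (n - 1) \<and> c 0 = - a * d 0
       \<and> (\<forall>i\<in>{1..n-1}. c i \<in> hplus (- a * d i) (d (i - 1)))"
proof -
  define l where "l = (LEAST i. c i \<noteq> 0)"
  define k where "k = (LEAST i. c (i + 1) = - (a powi (int (i + 1) - int l)) * c l)"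
  have coeffs': "\<forall>i. c i \<in> {0, 1, -1}" using coeffs by (simp add: sgn_hf_def)
  have cl: "c l \<noteq> 0" unfolding l_def using deg by (rule LeastI)
  have below: "\<forall>i<l. c i = 0" unfolding l_def using not_less_Least by blast
  have "l \<le> n" unfolding l_def using deg by (rule Least_le)
  note k = first_sign_change[OF a coeffs' below cl \<open>l \<le> n\<close> root, folded k_def]
  have d_rec': "d i =
      (if k < i \<and> c (i + 1) \<noteq> 0 then c (i + 1)
       else if k < i \<and> c (i + 1) = 0 then a * d (i + 1)
       else if l \<le> i \<and> i \<le> k then - (a powi (int i + int l - 1)) * c l
       else 0)" if "i < n" for i
    using d_rec[rule_format, OF that] unfolding k_def l_def Let_def .
  interpret linear_factor_quotient c d n l k a
    using coeffs' fin deg a below cl k d_rec' by unfold_locales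
  show ?thesis using in_hprod_linear_factor top_coeff bottom_coeff coeff_relation by auto
qed

end
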